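(* Let $b\ge a>1$ and define, for $t\in\mathbb{R}$, $$F_1(t)=\sum_{j=2}^\infty\frac{\exp\big(i t\, j^2(\log j)^b\big)}{j(\log j)^a}.$$ Then $F_1$, $\operatorname{Re}F_1$ and $\operatorname{Im}F_1$ are continuous and bounded on $\mathbb{R}$ but differentiable at no point of $\mathbb{R}$. If $b>a>1$, none of them is Lipschitz continuous at any point of $\mathbb{R}$.
   Context: A function $g\colon\mathbb{R}\to\mathbb{C}$ is Lipschitz continuous at $t_0$ if there exist constants $L>0$, $\eta>0$ such that $|g(t)-g(t_0)|\le L|t-t_0|$ for all $t\in\,]t_0-\eta,t_0+\eta[$. *)

theory Defs
  imports "HOL-Analysis.Analysis"
begin

definition F1 :: "real \<Rightarrow> real \<Rightarrow> real \<Rightarrow> complex" where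
  "F1 a b t = (\<Sum>n. let j = real (n + 2) in
      exp (\<i> * complex_of_real (t * j\<^sup>2 * (ln j) powr b))
        / complex_of_real (j * (ln j) powr a))"

definition lipschitz_at :: "(real \<Rightarrow> 'b::real_normed_vector) \<Rightarrow> real \<Rightarrow> bool" where
  "lipschitz_at g t0 \<longleftrightarrow> (\<exists>L>0. \<exists>\<eta>>0. \<forall>t. \<bar>t - t0\<bar> < \<eta> \<longrightarrow>
      norm (g t - g t0) \<le> L * \<bar>t - t0\<bar>)"

end

theory Submission
  imports Defs "HOL-Real_Asymp.Real_Asymp"
begin

text \<open>
  Write H(t) = \<Sum>j (A e^{i t \<lambda>_j} + B e^{-i t \<lambda>_j}) / w_j with \<lambda>_j = j^2 (ln j)^b and
  w_j = j (ln j)^a.  Suppose that near t0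
  |H(t0 + u) - H(t0) - D u| \<le> \<epsilon> |u|.  For large J put \<delta> = \<theta> J (ln J)^b and integrate
  H(t0 + s/\<delta>) - H(t0) - D s/\<delta> against the bump (1 - s^2) e^{-i \<lambda>_J s/\<delta>} over [-1, 1]:
  the result has size at most 2\<epsilon>/\<delta>.  Integrating the series termwise instead, the term j = J
  contributes (4/3) A e^{i t0 \<lambda>_J} / w_J, while the Fourier transform of the bump decays like
  1/\<nu>^2 and the gaps |\<lambda>_j - \<lambda>_J| \<ge> |j - J| J (ln J)^b put every other frequency at distance
  at least |j - J|/\<theta>; for small \<theta> and large J the remaining terms and the linear part
  contribute at most half of the peak.  Hence \<theta> (ln J)^{b-a} \<le> 6\<epsilon> for all large J, which
  rules out differentiability (\<epsilon> arbitrarily small) and, when b > a, Lipschitz continuity.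
\<close>

definition freq :: "real \<Rightarrow> nat \<Rightarrow> real" where
  "freq b n = real (n+2)^2 * ln (real (n+2)) powr b"

definition weight :: "real \<Rightarrow> nat \<Rightarrow> real" where
  "weight a n = real (n+2) * ln (real (n+2)) powr a"

lemma weight_pos [simp]: "0 < weight a n"
  unfolding weight_def by simp

lemma weight_nonneg [simp]: "0 \<le> weight a n"
  using weight_pos by (rule less_imp_le)

lemma weight_nonzero [simp]: "weight a n \<noteq> 0"
  using weight_pos by (rule less_imp_neq[symmetric])

lemma abs_weight [simp]: "\<bar>weight a n\<bar> = weight a n"
  using weight_pos by (rule abs_of_pos)

lemma summable_inverse_weight:
  assumes "1 < a"
  shows "summable (\<lambda>n. 1 / weight a n)"
proof -
  define f where "f m = 1 / (real (max 2 m) * ln (real (max 2 m)) powr a)" for m :: nat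
  have f_nonneg: "f m \<ge> 0" for m
    unfolding f_def by simp
  have f_decreasing: "f (Suc m) \<le> f m" for m
  proof -
    have "ln (real (max 2 m)) powr a \<le> ln (real (max 2 (Suc m))) powr a"
      using assms by (intro powr_mono2) auto
    then have "real (max 2 m) * ln (real (max 2 m)) powr a
               \<le> real (max 2 (Suc m)) * ln (real (max 2 (Suc m))) powr a"
      by (intro mult_mono) auto
    then show ?thesis
      unfolding f_def by (intro divide_left_mono) auto
  qed
  have "summable (\<lambda>k. 2^k * f (2^k))"
  proof (rule summable_comparison_test')
    show "summable (\<lambda>k. ln 2 powr (-a) * real k powr (-a))"
      using assms by (intro summable_mult) (simp add: summable_real_powr_iff)
    fix k :: nat
    assume "1 \<le> k"
    then have "max 2 (2^k) = (2::nat)^k"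
      using power_increasing[of 1 k "2::nat"] by simp
    have "ln (real (2^k)) = real k * ln 2"
      by (simp add: ln_realpow)
    then have "2^k * f (2^k) = (real k * ln 2) powr (-a)"
      unfolding f_def \<open>max 2 (2^k) = 2^k\<close> using \<open>1 \<le> k\<close> by (simp add: powr_minus field_simps)
    also have "\<dots> = ln 2 powr (-a) * real k powr (-a)"
      by (simp add: powr_mult mult.commute)
    finally show "norm (2^k * f (2^k)) \<le> ln 2 powr (-a) * real k powr (-a)"
      by simp
  qed
  then have "summable f"
    using condensation_test[of f] f_decreasing f_nonneg by blast
  then have "summable (\<lambda>n. f (n+2))"
    by (rule summable_iff_shift[THEN iffD2])
  moreover have "f (n+2) = 1 / weight a n" for n
    unfolding f_def weight_def by simp
  ultimately show ?thesis
    by simp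
qed

text \<open>With A = 1, B = 0 this is F1; with A = B = 1/2 and A = -i/2, B = i/2 it is the real and
  the imaginary part of F1.\<close>

definition series_term :: "real \<Rightarrow> real \<Rightarrow> complex \<Rightarrow> complex \<Rightarrow> real \<Rightarrow> nat \<Rightarrow> complex" where
  "series_term a b A B t n =
     (A * exp (\<i> * of_real (t * freq b n)) + B * exp (\<i> * of_real (- (t * freq b n))))
     / of_real (weight a n)"

definition mixed_series :: "real \<Rightarrow> real \<Rightarrow> complex \<Rightarrow> complex \<Rightarrow> real \<Rightarrow> complex" where
  "mixed_series a b A B t = (\<Sum>n. series_term a b A B t n)"

lemma norm_series_term_le:
  assumes "norm A \<le> 1" "norm B \<le> 1"
  shows "norm (series_term a b A B t n) \<le> 2 / weight a n"
proof -
  have "norm (A * exp (\<i> * of_real (t * freq b n)) + B * exp (\<i> * of_real (- (t * freq b n)))) \<le> 2"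
    using assms norm_triangle_le[of "A * exp (\<i> * of_real (t * freq b n))"
                                    "B * exp (\<i> * of_real (- (t * freq b n)))" 2]
    by (simp add: norm_mult)
  then show ?thesis
    unfolding series_term_def norm_divide norm_of_real abs_weight by (rule divide_right_mono) simp_all
qed

lemma summable_twice_inverse_weight: "1 < a \<Longrightarrow> summable (\<lambda>n. 2 / weight a n)"
  using summable_mult[OF summable_inverse_weight, of a 2] by simp

lemma summable_series_term:
  assumes "1 < a" "norm A \<le> 1" "norm B \<le> 1"
  shows "summable (series_term a b A B t)"
  using assms norm_series_term_le
  by (intro summable_comparison_test[OF _ summable_twice_inverse_weight]) auto

lemma continuous_on_mixed_series:
  assumes "1 < a" "norm A \<le> 1" "norm B \<le> 1"
  shows "continuous_on S (mixed_series a b A B)"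
proof (rule uniform_limit_theorem)
  show "uniform_limit S (\<lambda>N t. \<Sum>n<N. series_term a b A B t n) (mixed_series a b A B) sequentially"
    unfolding mixed_series_def using assms
    by (intro Weierstrass_m_test[OF norm_series_term_le] summable_twice_inverse_weight)
  show "\<forall>\<^sub>F N in sequentially. continuous_on S (\<lambda>t. \<Sum>n<N. series_term a b A B t n)"
    unfolding series_term_def
    by (auto intro!: always_eventually continuous_intros)
qed simp

lemma norm_mixed_series_le:
  assumes "1 < a" "norm A \<le> 1" "norm B \<le> 1"
  shows "norm (mixed_series a b A B t) \<le> (\<Sum>n. 2 / weight a n)"
  unfolding mixed_series_def using assms
  by (intro order.trans[OF summable_norm] suminf_le summable_comparison_test[OF _ summable_twice_inverse_weight])
     (auto intro: norm_series_term_le)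

lemma F1_eq_mixed_series: "F1 a b = mixed_series a b 1 0"
  by (auto simp: F1_def mixed_series_def series_term_def freq_def weight_def Let_def mult.assoc)

lemma mixed_series_eq:
  assumes "1 < a"
  shows "mixed_series a b A B t = A * F1 a b t + B * cnj (F1 a b t)"
proof -
  let ?u = "series_term a b 1 0 t"
  have u: "?u sums F1 a b t"
    unfolding F1_eq_mixed_series mixed_series_def
    using summable_series_term[OF assms, of 1 0] by (simp add: summable_sums)
  have "series_term a b A B t = (\<lambda>n. A * ?u n + B * cnj (?u n))"
    unfolding series_term_def by (simp add: exp_cnj add_divide_distrib)
  moreover have "(\<lambda>n. A * ?u n + B * cnj (?u n)) sums (A * F1 a b t + B * cnj (F1 a b t))"
    by (intro sums_add sums_mult sums_cnj[THEN iffD2] u)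
  ultimately show ?thesis
    unfolding mixed_series_def by (simp add: sums_unique[symmetric])
qed

lemma of_real_Re_F1: "1 < a \<Longrightarrow> complex_of_real (Re (F1 a b t)) = mixed_series a b (1/2) (1/2) t"
  by (simp add: mixed_series_eq complex_eq_iff)

lemma of_real_Im_F1: "1 < a \<Longrightarrow> complex_of_real (Im (F1 a b t)) = mixed_series a b (- \<i>/2) (\<i>/2) t"
  by (simp add: mixed_series_eq complex_eq_iff)

section \<open>The Fourier transform of the bump 1 - s^2 on [-1, 1]\<close>

text \<open>Three integrations by parts give this antiderivative of
  exp (z x) (C0 + C1 x) (1 - x^2); its boundary terms decay like 1 / z^2.\<close>

definition bump_antideriv :: "complex \<Rightarrow> complex \<Rightarrow> complex \<Rightarrow> complex \<Rightarrow> complex" where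
  "bump_antideriv C0 C1 z x = exp (z * x) * (
      (C0 + C1 * x) * (1 - x^2) / z
    - (C1 * (1 - x^2) - 2 * x * (C0 + C1 * x)) / z^2
    + (- 2 * C0 - 6 * C1 * x) / z^3
    + 6 * C1 / z^4)"

lemma bump_antideriv_has_field_derivative:
  assumes "z \<noteq> 0"
  shows "(bump_antideriv C0 C1 z has_field_derivative exp (z * x) * ((C0 + C1 * x) * (1 - x^2))) (at x)"
proof -
  define q0 where "q0 = C0/z - C1/z^2 - 2*C0/z^3 + 6*C1/z^4"
  define q1 where "q1 = C1/z + 2*C0/z^2 - 6*C1/z^3"
  define q2 where "q2 = - C0/z + 3*C1/z^2"
  define q3 where "q3 = - C1/z"
  have poly: "bump_antideriv C0 C1 z = (\<lambda>x. exp (z * x) * (q0 + q1 * x + q2 * x^2 + q3 * x^3))"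
    unfolding bump_antideriv_def q0_def q1_def q2_def q3_def using assms
    by (intro ext) (simp add: field_simps power2_eq_square power3_eq_cube eval_nat_numeral)
  have "((\<lambda>x. exp (z * x) * (q0 + q1 * x + q2 * x^2 + q3 * x^3)) has_field_derivative
      exp (z * x) * z * (q0 + q1 * x + q2 * x^2 + q3 * x^3)
      + exp (z * x) * (q1 + 2 * q2 * x + 3 * q3 * x^2)) (at x)"
    by (auto intro!: derivative_eq_intros simp: algebra_simps power2_eq_square)
  moreover have "exp (z * x) * z * (q0 + q1 * x + q2 * x^2 + q3 * x^3)
      + exp (z * x) * (q1 + 2 * q2 * x + 3 * q3 * x^2) = exp (z * x) * ((C0 + C1 * x) * (1 - x^2))"
    unfolding q0_def q1_def q2_def q3_def using assms
    by (simp add: field_simps power2_eq_square power3_eq_cube eval_nat_numeral)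
  ultimately show ?thesis
    by (simp add: poly)
qed

lemma has_integral_linear_bump:
  fixes C0 C1 :: complex
  assumes "\<nu> \<noteq> 0"
  shows "((\<lambda>s. (C0 + C1 * of_real s) * of_real (1 - s^2) * exp (\<i> * of_real (\<nu> * s))) has_integral
          (bump_antideriv C0 C1 (\<i> * of_real \<nu>) 1 - bump_antideriv C0 C1 (\<i> * of_real \<nu>) (-1))) {-1..1}"
proof -
  have "\<i> * complex_of_real \<nu> \<noteq> 0"
    using assms by simp
  then have "((\<lambda>s. exp (\<i> * of_real \<nu> * of_real s) * ((C0 + C1 * of_real s) * (1 - (of_real s)^2)))
      has_integral (bump_antideriv C0 C1 (\<i> * of_real \<nu>) (of_real 1)
                    - bump_antideriv C0 C1 (\<i> * of_real \<nu>) (of_real (-1)))) {-1..1}"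
    by (intro fundamental_theorem_of_calculus)
       (auto intro!: has_vector_derivative_real_field bump_antideriv_has_field_derivative)
  then show ?thesis
    by (simp add: mult_ac)
qed

lemma norm_bump_boundary_le:
  fixes q1 q2 q3 :: complex
  assumes "1 \<le> \<bar>\<nu>\<bar>"
  shows "norm (exp (\<i> * of_real \<nu> * of_real r)
               * (q1 / (\<i> * of_real \<nu>)^2 + q2 / (\<i> * of_real \<nu>)^3 + q3 / (\<i> * of_real \<nu>)^4))
         \<le> (norm q1 + norm q2 + norm q3) / \<nu>^2"
proof -
  have unit: "norm (exp (\<i> * of_real \<nu> * of_real r)) = 1"
    by (metis mult.assoc norm_exp_i_times of_real_mult)
  have "norm q2 / \<bar>\<nu>\<bar>^3 \<le> norm q2 / \<nu>^2"
    using assms by (intro divide_left_mono) (auto simp: power_increasing[of 2 3 "\<bar>\<nu>\<bar>", simplified])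
  moreover have "norm q3 / \<bar>\<nu>\<bar>^4 \<le> norm q3 / \<nu>^2"
    using assms by (intro divide_left_mono) (auto simp: power_increasing[of 2 4 "\<bar>\<nu>\<bar>", simplified])
  moreover have "norm (q1 / (\<i> * of_real \<nu>)^2 + q2 / (\<i> * of_real \<nu>)^3 + q3 / (\<i> * of_real \<nu>)^4)
      \<le> norm q1 / \<bar>\<nu>\<bar>^2 + norm q2 / \<bar>\<nu>\<bar>^3 + norm q3 / \<bar>\<nu>\<bar>^4"
    using norm_triangle_ineq[of "q1 / (\<i> * of_real \<nu>)^2 + q2 / (\<i> * of_real \<nu>)^3" "q3 / (\<i> * of_real \<nu>)^4"]
          norm_triangle_ineq[of "q1 / (\<i> * of_real \<nu>)^2" "q2 / (\<i> * of_real \<nu>)^3"]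
    by (simp add: norm_divide norm_power norm_mult)
  ultimately show ?thesis
    by (simp add: norm_mult unit add_divide_distrib)
qed

lemma norm_bump_antideriv_diff_le:
  fixes C0 C1 :: complex
  assumes "1 \<le> \<bar>\<nu>\<bar>"
  shows "norm (bump_antideriv C0 C1 (\<i> * of_real \<nu>) 1 - bump_antideriv C0 C1 (\<i> * of_real \<nu>) (-1))
         \<le> (8 * norm C0 + 28 * norm C1) / \<nu>^2"
proof -
  let ?z = "\<i> * complex_of_real \<nu>"
  have "bump_antideriv C0 C1 ?z 1
      = exp (?z * of_real 1) * ((2 * (C0 + C1)) / ?z^2 + (- 2 * C0 - 6 * C1) / ?z^3 + (6 * C1) / ?z^4)"
    unfolding bump_antideriv_def by (simp add: algebra_simps diff_divide_distrib add_divide_distrib)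
  then have right: "norm (bump_antideriv C0 C1 ?z 1)
      \<le> (norm (2 * (C0 + C1)) + norm (- 2 * C0 - 6 * C1) + norm (6 * C1)) / \<nu>^2"
    by (simp only:) (rule norm_bump_boundary_le[OF assms])
  have "bump_antideriv C0 C1 ?z (-1)
      = exp (?z * of_real (-1)) * ((-2 * (C0 - C1)) / ?z^2 + (- 2 * C0 + 6 * C1) / ?z^3 + (6 * C1) / ?z^4)"
    unfolding bump_antideriv_def by (simp add: algebra_simps diff_divide_distrib add_divide_distrib)
  then have left: "norm (bump_antideriv C0 C1 ?z (-1))
      \<le> (norm (-2 * (C0 - C1)) + norm (- 2 * C0 + 6 * C1) + norm (6 * C1)) / \<nu>^2"
    by (simp only:) (rule norm_bump_boundary_le[OF assms])
  have "norm (2 * (C0 + C1)) \<le> 2 * norm C0 + 2 * norm C1"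
       "norm (-2 * (C0 - C1)) \<le> 2 * norm C0 + 2 * norm C1"
    using norm_triangle_ineq[of C0 C1] norm_triangle_ineq4[of C0 C1] unfolding norm_mult by simp_all
  moreover have "norm (- 2 * C0 - 6 * C1) \<le> 2 * norm C0 + 6 * norm C1"
                "norm (- 2 * C0 + 6 * C1) \<le> 2 * norm C0 + 6 * norm C1"
    using norm_triangle_ineq4[of "- 2 * C0" "6 * C1"] norm_triangle_ineq[of "- 2 * C0" "6 * C1"]
    unfolding norm_mult by simp_all
  moreover have "norm (6 * C1) = 6 * norm C1"
    by (simp add: norm_mult)
  ultimately have "norm (2 * (C0 + C1)) + norm (- 2 * C0 - 6 * C1) + norm (6 * C1) \<le> 4 * norm C0 + 14 * norm C1"
                  "norm (-2 * (C0 - C1)) + norm (- 2 * C0 + 6 * C1) + norm (6 * C1) \<le> 4 * norm C0 + 14 * norm C1"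
    by linarith+
  then have "norm (bump_antideriv C0 C1 ?z 1) \<le> (4 * norm C0 + 14 * norm C1) / \<nu>^2"
            "norm (bump_antideriv C0 C1 ?z (-1)) \<le> (4 * norm C0 + 14 * norm C1) / \<nu>^2"
    using right left by (meson divide_right_mono order_trans zero_le_power2)+
  moreover have "(4 * norm C0 + 14 * norm C1) / \<nu>^2 + (4 * norm C0 + 14 * norm C1) / \<nu>^2
               = (8 * norm C0 + 28 * norm C1) / \<nu>^2"
    by (simp add: add_divide_distrib[symmetric])
  ultimately show ?thesis
    using norm_triangle_ineq4[of "bump_antideriv C0 C1 ?z 1" "bump_antideriv C0 C1 ?z (-1)"] by linarith
qed

lemma norm_linear_bump_integral_le:
  fixes C0 C1 :: complex
  assumes "1 \<le> \<bar>\<nu>\<bar>"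
    and "((\<lambda>s. (C0 + C1 * of_real s) * of_real (1 - s^2) * exp (\<i> * of_real (\<nu> * s))) has_integral I) {-1..1}"
  shows "norm I \<le> (8 * norm C0 + 28 * norm C1) / \<nu>^2"
proof -
  have "\<nu> \<noteq> 0"
    using assms(1) by auto
  from has_integral_unique[OF assms(2) has_integral_linear_bump[OF this]] norm_bump_antideriv_diff_le[OF assms(1)]
  show ?thesis
    by simp
qed

definition bump_ft :: "real \<Rightarrow> complex" where
  "bump_ft \<nu> = integral {-1..1} (\<lambda>s. of_real (1 - s^2) * exp (\<i> * of_real (\<nu> * s)))"

lemma has_integral_bump_ft:
  "((\<lambda>s. of_real (1 - s^2) * exp (\<i> * of_real (\<nu> * s))) has_integral bump_ft \<nu>) {-1..1}"
  unfolding bump_ft_def by (intro integrable_integral integrable_continuous_interval continuous_intros)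

lemma bump_ft_0: "bump_ft 0 = 4/3"
proof -
  have "((\<lambda>z. z - z^3/3) has_field_derivative (1 - z^2)) (at z)" for z :: complex
    by (auto intro!: derivative_eq_intros simp: power2_eq_square)
  then have "((\<lambda>s. 1 - (complex_of_real s)^2) has_integral
      ((of_real 1 - (of_real 1)^3/3) - (of_real (-1) - (of_real (-1))^3/3))) {-1..1}"
    by (intro fundamental_theorem_of_calculus) (auto intro!: has_vector_derivative_real_field)
  then have "((\<lambda>s. of_real (1 - s^2) * exp (\<i> * of_real (0 * s))) has_integral (4/3 :: complex)) {-1..1}"
    by simp
  then show ?thesis
    using has_integral_bump_ft has_integral_unique by blast
qed

lemma norm_bump_ft_le:
  assumes "1 \<le> r" "r \<le> \<bar>\<nu>\<bar>"
  shows "norm (bump_ft \<nu>) \<le> 8 / r^2"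
proof -
  have "norm (bump_ft \<nu>) \<le> (8 * norm (1::complex) + 28 * norm (0::complex)) / \<nu>^2"
    using assms has_integral_bump_ft[of \<nu>] by (intro norm_linear_bump_integral_le) simp_all
  also have "\<dots> \<le> 8 / r^2"
  proof -
    have "r^2 \<le> \<nu>^2"
      using assms abs_le_square_iff[of r \<nu>] by simp
    then show ?thesis
      using assms by (simp add: frac_le)
  qed
  finally show ?thesis .
qed

section \<open>Separation of the frequencies\<close>

lemma freq_gap:
  assumes "0 \<le> b"
  shows "\<bar>real n - real J\<bar> * real (J+2) * ln (real (J+2)) powr b \<le> \<bar>freq b n - freq b J\<bar>"
proof -
  define x where "x = real (J+2)"
  define y where "y = real (n+2)"
  have "x \<ge> 2" "y \<ge> 2"
    unfolding x_def y_def by auto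
  have diff: "real n - real J = y - x"
    unfolding x_def y_def by simp
  have freq: "freq b n = y^2 * ln y powr b" "freq b J = x^2 * ln x powr b"
    unfolding freq_def x_def y_def by auto
  show ?thesis
  proof (cases "y \<le> x")
    case True
    have "ln y powr b \<le> ln x powr b"
      using True \<open>y \<ge> 2\<close> assms by (intro powr_mono2) auto
    then have "y^2 * ln y powr b \<le> y^2 * ln x powr b"
      by (intro mult_left_mono) auto
    moreover have "(x - y) * x \<le> x^2 - y^2"
      using True \<open>y \<ge> 2\<close> by (simp add: power2_eq_square algebra_simps mult_left_mono)
    then have "(x - y) * x * ln x powr b \<le> (x^2 - y^2) * ln x powr b"
      by (intro mult_right_mono) auto
    ultimately show ?thesis
      using True unfolding diff freq x_def[symmetric] by (simp add: algebra_simps)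
  next
    case False
    have "ln x powr b \<le> ln y powr b"
      using False \<open>x \<ge> 2\<close> assms by (intro powr_mono2) auto
    then have "y^2 * ln x powr b \<le> y^2 * ln y powr b"
      by (intro mult_left_mono) auto
    moreover have "(y - x) * x \<le> y^2 - x^2"
      using False \<open>x \<ge> 2\<close> by (simp add: power2_eq_square algebra_simps mult_left_mono)
    then have "(y - x) * x * ln x powr b \<le> (y^2 - x^2) * ln x powr b"
      by (intro mult_right_mono) auto
    ultimately show ?thesis
      using False unfolding diff freq x_def[symmetric] by (simp add: algebra_simps)
  qed
qed

definition inv_sq_dist :: "nat \<Rightarrow> nat \<Rightarrow> real" where
  "inv_sq_dist J n = (if n = J then 0 else 1 / (real n - real J)^2)"

lemma inv_sq_dist_nonneg: "0 \<le> inv_sq_dist J n"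
  unfolding inv_sq_dist_def by simp

lemma inverse_square_le_telescoping:
  fixes m :: real
  assumes "1 \<le> m"
  shows "1 / m^2 \<le> 2 / m - 2 / (m + 1)"
proof -
  have "m * (m + 1) \<le> 2 * m^2"
    using assms by (simp add: power2_eq_square algebra_simps)
  then have "1 / m^2 \<le> 2 / (m * (m + 1))"
    using assms by (simp add: divide_simps)
  moreover have "2 / m - 2 / (m + 1) = 2 / (m * (m + 1))"
    using assms by (simp add: field_simps)
  ultimately show ?thesis
    by simp
qed

lemma sum_inv_sq_dist_le_telescoping:
  "(\<Sum>n<N. inv_sq_dist J n)
   \<le> (if N \<le> J then 2 / (real J - real N + 1) - 2 / (real J + 1) else 4 - 2 / (real N - real J))"
proof (induction N)
  case 0
  then show ?case
    by simp
next
  case (Suc N)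
  show ?case
  proof (cases "Suc N \<le> J")
    case True
    then have "inv_sq_dist J N = 1 / (real J - real N)^2"
      unfolding inv_sq_dist_def by (simp add: power2_commute)
    moreover have "1 / (real J - real N)^2 \<le> 2 / (real J - real N) - 2 / (real J - real N + 1)"
      using True by (intro inverse_square_le_telescoping) auto
    ultimately show ?thesis
      using Suc True by (simp add: of_nat_diff)
  next
    case False
    show ?thesis
    proof (cases "N = J")
      case True
      then have "sum (inv_sq_dist J) {..<Suc N} = sum (inv_sq_dist J) {..<N}"
        by (simp add: inv_sq_dist_def)
      moreover have "sum (inv_sq_dist J) {..<N} \<le> 2 - 2 / (real J + 1)"
        using Suc.IH True by simp
      moreover have "0 \<le> 2 / (real J + 1)"
        by simp
      ultimately have "sum (inv_sq_dist J) {..<Suc N} \<le> 2"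
        by linarith
      then show ?thesis
        using True by simp
    next
      case False
      with \<open>\<not> Suc N \<le> J\<close> have "J < N"
        by simp
      then have "inv_sq_dist J N = 1 / (real N - real J)^2"
        unfolding inv_sq_dist_def by simp
      moreover have "1 / (real N - real J)^2 \<le> 2 / (real N - real J) - 2 / (real N - real J + 1)"
        using \<open>J < N\<close> by (intro inverse_square_le_telescoping) auto
      ultimately show ?thesis
        using Suc \<open>J < N\<close> by (simp add: algebra_simps)
    qed
  qed
qed

lemma sum_inv_sq_dist_le: "(\<Sum>n<N. inv_sq_dist J n) \<le> 4"
proof (cases "N \<le> J")
  case True
  have "2 / (real J - real N + 1) \<le> 2"
    using True by (simp add: field_simps)
  moreover have "0 \<le> 2 / (real J + 1)"
    by simp
  moreover have "(\<Sum>n<N. inv_sq_dist J n) \<le> 2 / (real J - real N + 1) - 2 / (real J + 1)"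
    using sum_inv_sq_dist_le_telescoping[of J N] True by simp
  ultimately show ?thesis
    by linarith
next
  case False
  then have "0 \<le> 2 / (real N - real J)"
    by simp
  moreover have "(\<Sum>n<N. inv_sq_dist J n) \<le> 4 - 2 / (real N - real J)"
    using sum_inv_sq_dist_le_telescoping[of J N] False by simp
  ultimately show ?thesis
    by linarith
qed

lemma summable_inv_sq_dist: "summable (inv_sq_dist J)"
  by (rule summableI_nonneg_bounded[of _ 4]) (auto intro: inv_sq_dist_nonneg sum_inv_sq_dist_le)

lemma suminf_inv_sq_dist_le: "suminf (inv_sq_dist J) \<le> 4"
  by (rule suminf_le_const[OF summable_inv_sq_dist sum_inv_sq_dist_le])

lemma weight_le_of_ge_half:
  assumes "0 < a" "2 \<le> J" "real (J+2) \<le> 2 * real (n+2)"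
  shows "weight a J \<le> 2 * 2 powr a * weight a n"
proof -
  define x where "x = real (J+2)"
  define y where "y = real (n+2)"
  have "4 \<le> x" "x / 2 \<le> y"
    unfolding x_def y_def using assms(2,3) by auto
  have "2 * ln 2 = ln (4::real)"
    using ln_realpow[of 2 2] by simp
  also have "\<dots> \<le> ln x"
    using \<open>4 \<le> x\<close> by simp
  finally have "ln x / 2 \<le> ln x - ln 2"
    by simp
  also have "\<dots> = ln (x / 2)"
    using \<open>4 \<le> x\<close> by (simp add: ln_div)
  also have "\<dots> \<le> ln y"
    using \<open>x / 2 \<le> y\<close> \<open>4 \<le> x\<close> by simp
  finally have "(ln x / 2) powr a \<le> ln y powr a"
    using \<open>4 \<le> x\<close> assms(1) by (intro powr_mono2) auto
  then have "(x / 2) * (ln x powr a / 2 powr a) \<le> y * ln y powr a"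
    using \<open>x / 2 \<le> y\<close> \<open>4 \<le> x\<close> by (intro mult_mono) (auto simp: powr_divide)
  then show ?thesis
    unfolding weight_def x_def[symmetric] y_def[symmetric] by (simp add: field_simps)
qed

text \<open>Terms with j near J are controlled by the weight at J, the others by the distance.\<close>

lemma inv_sq_dist_div_weight_le:
  assumes "0 < a" "2 \<le> J"
  shows "inv_sq_dist J n / weight a n
         \<le> 2 * 2 powr a / weight a J * inv_sq_dist J n + 4 / real (J+2)^2 * (1 / weight a n)"
proof (cases "real (J+2) \<le> 2 * real (n+2)")
  case True
  have "inv_sq_dist J n * weight a J \<le> inv_sq_dist J n * (2 * 2 powr a * weight a n)"
    using weight_le_of_ge_half[OF assms True] inv_sq_dist_nonneg by (rule mult_left_mono)
  then have "inv_sq_dist J n / weight a n \<le> 2 * 2 powr a / weight a J * inv_sq_dist J n"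
    by (simp add: field_simps)
  moreover have "0 \<le> 4 / real (J+2)^2 * (1 / weight a n)"
    by simp
  ultimately show ?thesis
    by linarith
next
  case False
  then have "real (J+2) / 2 \<le> real J - real n" "n \<noteq> J"
    by auto
  then have "(real (J+2) / 2)^2 \<le> (real n - real J)^2"
    using power_mono[of "real (J+2) / 2" "real J - real n" 2] by (simp add: power2_commute)
  then have "inv_sq_dist J n \<le> 4 / real (J+2)^2"
    unfolding inv_sq_dist_def using \<open>n \<noteq> J\<close> by (simp add: field_simps)
  from divide_right_mono[OF this weight_nonneg[of a n]]
  have "inv_sq_dist J n / weight a n \<le> 4 / real (J+2)^2 * (1 / weight a n)"
    by simp
  moreover have "0 \<le> 2 * 2 powr a / weight a J * inv_sq_dist J n"
    by (simp add: inv_sq_dist_nonneg)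
  ultimately show ?thesis
    by linarith
qed

lemma sum_inv_sq_dist_div_weight:
  assumes "1 < a" "2 \<le> J"
  shows "summable (\<lambda>n. inv_sq_dist J n / weight a n)"
    and "(\<Sum>n. inv_sq_dist J n / weight a n)
         \<le> 8 * 2 powr a / weight a J + 4 / real (J+2)^2 * (\<Sum>n. 1 / weight a n)"
proof -
  let ?g = "\<lambda>n. 2 * 2 powr a / weight a J * inv_sq_dist J n + 4 / real (J+2)^2 * (1 / weight a n)"
  have g: "?g sums (2 * 2 powr a / weight a J * suminf (inv_sq_dist J)
                    + 4 / real (J+2)^2 * (\<Sum>n. 1 / weight a n))"
    using assms(1) by (intro sums_add sums_mult summable_sums summable_inv_sq_dist summable_inverse_weight)
  have le: "inv_sq_dist J n / weight a n \<le> ?g n" for n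
    using assms by (intro inv_sq_dist_div_weight_le) auto
  show summable: "summable (\<lambda>n. inv_sq_dist J n / weight a n)"
    using g le by (intro summable_comparison_test[OF _ sums_summable[OF g]])
                  (auto simp: inv_sq_dist_nonneg)
  have "(\<Sum>n. inv_sq_dist J n / weight a n) \<le> suminf ?g"
    by (intro suminf_le le summable sums_summable[OF g])
  also have "\<dots> \<le> 2 * 2 powr a / weight a J * 4 + 4 / real (J+2)^2 * (\<Sum>n. 1 / weight a n)"
    unfolding sums_unique[OF g, symmetric] using suminf_inv_sq_dist_le[of J]
    by (intro add_right_mono mult_left_mono) auto
  finally show "(\<Sum>n. inv_sq_dist J n / weight a n)
                \<le> 8 * 2 powr a / weight a J + 4 / real (J+2)^2 * (\<Sum>n. 1 / weight a n)"
    by simp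
qed

definition windowed_term ::
    "real \<Rightarrow> real \<Rightarrow> complex \<Rightarrow> complex \<Rightarrow> real \<Rightarrow> real \<Rightarrow> real \<Rightarrow> nat \<Rightarrow> complex" where
  "windowed_term a b A B t0 \<delta> \<mu> n =
     A * exp (\<i> * of_real (t0 * freq b n)) / of_real (weight a n) * bump_ft (freq b n / \<delta> - \<mu>)
   + B * exp (\<i> * of_real (- (t0 * freq b n))) / of_real (weight a n) * bump_ft (- freq b n / \<delta> - \<mu>)"

lemma has_integral_modulated_series_term:
  "((\<lambda>s. of_real (1 - s^2) * exp (\<i> * of_real (- \<mu> * s)) * series_term a b A B (t0 + s / \<delta>) n)
     has_integral windowed_term a b A B t0 \<delta> \<mu> n) {-1..1}"
proof -
  define c1 where "c1 = A * exp (\<i> * of_real (t0 * freq b n)) / of_real (weight a n)"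
  define c2 where "c2 = B * exp (\<i> * of_real (- (t0 * freq b n))) / of_real (weight a n)"
  have phase: "exp (\<i> * of_real p) * exp (\<i> * of_real q) = exp (\<i> * of_real (p + q))" for p q
    by (simp add: exp_add[symmetric] distrib_left)
  have "of_real (1 - s^2) * exp (\<i> * of_real (- \<mu> * s)) * series_term a b A B (t0 + s / \<delta>) n
      = c1 * (of_real (1 - s^2) * exp (\<i> * of_real ((freq b n / \<delta> - \<mu>) * s)))
      + c2 * (of_real (1 - s^2) * exp (\<i> * of_real ((- freq b n / \<delta> - \<mu>) * s)))" for s
  proof -
    have e1: "exp (\<i> * of_real (- \<mu> * s)) * exp (\<i> * of_real ((t0 + s / \<delta>) * freq b n))
            = exp (\<i> * of_real (t0 * freq b n)) * exp (\<i> * of_real ((freq b n / \<delta> - \<mu>) * s))"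
     and e2: "exp (\<i> * of_real (- \<mu> * s)) * exp (\<i> * of_real (- ((t0 + s / \<delta>) * freq b n)))
            = exp (\<i> * of_real (- (t0 * freq b n))) * exp (\<i> * of_real ((- freq b n / \<delta> - \<mu>) * s))"
      unfolding phase by (rule arg_cong[where f = "\<lambda>x. exp (\<i> * of_real x)"], simp add: algebra_simps)+
    have "of_real (1 - s^2) * exp (\<i> * of_real (- \<mu> * s)) * series_term a b A B (t0 + s / \<delta>) n
        = of_real (1 - s^2)
          * (A * (exp (\<i> * of_real (- \<mu> * s)) * exp (\<i> * of_real ((t0 + s / \<delta>) * freq b n)))
           + B * (exp (\<i> * of_real (- \<mu> * s)) * exp (\<i> * of_real (- ((t0 + s / \<delta>) * freq b n)))))
          / of_real (weight a n)"
      unfolding series_term_def by (simp add: algebra_simps)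
    also have "\<dots> = c1 * (of_real (1 - s^2) * exp (\<i> * of_real ((freq b n / \<delta> - \<mu>) * s)))
                    + c2 * (of_real (1 - s^2) * exp (\<i> * of_real ((- freq b n / \<delta> - \<mu>) * s)))"
      unfolding e1 e2 c1_def c2_def by (simp add: field_simps)
    finally show ?thesis .
  qed
  moreover have "((\<lambda>s. c1 * (of_real (1 - s^2) * exp (\<i> * of_real ((freq b n / \<delta> - \<mu>) * s)))
      + c2 * (of_real (1 - s^2) * exp (\<i> * of_real ((- freq b n / \<delta> - \<mu>) * s))))
      has_integral windowed_term a b A B t0 \<delta> \<mu> n) {-1..1}"
    unfolding windowed_term_def c1_def[symmetric] c2_def[symmetric]
    by (intro has_integral_add has_integral_mult_right has_integral_bump_ft)
  ultimately show ?thesis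
    by simp
qed

lemma has_integral_windowed_mixed_series:
  assumes "1 < a" "norm A \<le> 1" "norm B \<le> 1" "\<delta> \<noteq> 0"
  obtains I where "windowed_term a b A B t0 \<delta> \<mu> sums I"
    and "((\<lambda>s. of_real (1 - s^2) * exp (\<i> * of_real (- \<mu> * s)) * mixed_series a b A B (t0 + s / \<delta>))
          has_integral I) {-1..1}"
proof -
  define g where
    "g n s = of_real (1 - s^2) * exp (\<i> * of_real (- \<mu> * s)) * series_term a b A B (t0 + s / \<delta>) n" for n s
  have "norm (g n s) \<le> 2 / weight a n" if "s \<in> {-1..1}" for n s
  proof -
    have "\<bar>1 - s^2\<bar> \<le> 1"
      using that abs_square_le_1[of s] by auto
    then have "norm (g n s) \<le> 1 * 1 * (2 / weight a n)"
      unfolding g_def norm_mult norm_of_real using assms norm_series_term_le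
      by (intro mult_mono) (auto simp del: of_real_diff of_real_power)
    then show ?thesis
      by simp
  qed
  then have uniform: "uniform_limit {-1..1} (\<lambda>N s. \<Sum>n<N. g n s) (\<lambda>s. \<Sum>n. g n s) sequentially"
    by (rule Weierstrass_m_test[OF _ summable_twice_inverse_weight[OF assms(1)]])
  have continuous: "continuous_on {-1..1} (\<lambda>s. \<Sum>n<N. g n s)" for N
    unfolding g_def series_term_def using assms(4) by (intro continuous_intros) auto
  obtain IN I where IN: "\<And>N. ((\<lambda>s. \<Sum>n<N. g n s) has_integral IN N) {-1..1}"
    and I: "((\<lambda>s. \<Sum>n. g n s) has_integral I) {-1..1}" and IN_lim: "IN \<longlonglongrightarrow> I"
    using uniform_limit_integral[OF uniform continuous] by auto
  have "(g n has_integral windowed_term a b A B t0 \<delta> \<mu> n) {-1..1}" for n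
    unfolding g_def by (rule has_integral_modulated_series_term)
  then have "IN N = (\<Sum>n<N. windowed_term a b A B t0 \<delta> \<mu> n)" for N
    using has_integral_unique[OF IN[of N] has_integral_sum] by simp
  then have "IN = (\<lambda>N. \<Sum>n<N. windowed_term a b A B t0 \<delta> \<mu> n)"
    by (rule ext)
  then have "windowed_term a b A B t0 \<delta> \<mu> sums I"
    using IN_lim unfolding sums_def by simp
  moreover have "(\<Sum>n. g n s) = of_real (1 - s^2) * exp (\<i> * of_real (- \<mu> * s))
                                 * mixed_series a b A B (t0 + s / \<delta>)" for s
    unfolding g_def mixed_series_def using assms by (intro suminf_mult summable_series_term)
  ultimately show ?thesis
    using I that by simp
qed

lemma norm_bump_integral_le:
  assumes "((\<lambda>s. of_real (1 - s^2) * exp (\<i> * of_real (\<nu> * s)) * f s) has_integral X) {-1..1}"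
    and "\<And>s. s \<in> {-1..1} \<Longrightarrow> norm (f s) \<le> M"
  shows "norm X \<le> 2 * M"
proof -
  have "norm X \<le> M * measure lborel (cbox (-1::real) 1)"
  proof (rule has_integral_bound)
    have "norm (f 0) \<le> M"
      using assms(2) by simp
    then show "0 \<le> M"
      by (rule order_trans[OF norm_ge_zero])
    show "((\<lambda>s. of_real (1 - s^2) * exp (\<i> * of_real (\<nu> * s)) * f s) has_integral X) (cbox (-1) 1)"
      using assms(1) by simp
    fix s :: real
    assume "s \<in> cbox (-1) 1"
    then have "\<bar>1 - s^2\<bar> \<le> 1" "norm (f s) \<le> M"
      using abs_square_le_1[of s] assms(2) by auto
    then have "\<bar>1 - s^2\<bar> * norm (f s) \<le> 1 * M"
      by (intro mult_mono) auto
    moreover have "norm (exp (\<i> * of_real (\<nu> * s))) = 1"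
      by (rule norm_exp_i_times)
    ultimately show "norm (of_real (1 - s^2) * exp (\<i> * of_real (\<nu> * s)) * f s) \<le> M"
      unfolding norm_mult norm_of_real by simp
  qed
  then show ?thesis
    by (simp add: mult.commute)
qed

lemma norm_increment_integral_le:
  fixes f :: "real \<Rightarrow> complex"
  assumes "0 < \<delta>"
    and approx: "\<And>u. \<bar>u\<bar> \<le> 1 / \<delta> \<Longrightarrow> norm (f (t0 + u) - f t0 - u *\<^sub>R D) \<le> \<epsilon> * \<bar>u\<bar>"
    and "((\<lambda>s. of_real (1 - s^2) * exp (\<i> * of_real (\<nu> * s)) * (f (t0 + s / \<delta>) - f t0 - (s / \<delta>) *\<^sub>R D))
          has_integral X) {-1..1}"
  shows "norm X \<le> 2 * (\<epsilon> / \<delta>)"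
proof -
  have "norm (f (t0 + 1 / \<delta>) - f t0 - (1 / \<delta>) *\<^sub>R D) \<le> \<epsilon> * \<bar>1 / \<delta>\<bar>"
    using \<open>0 < \<delta>\<close> by (intro approx) simp
  then have "0 \<le> \<epsilon> * \<bar>1 / \<delta>\<bar>"
    by (rule order_trans[OF norm_ge_zero])
  then have "0 \<le> \<epsilon>"
    using \<open>0 < \<delta>\<close> by (simp add: zero_le_divide_iff)
  show ?thesis
  proof (rule norm_bump_integral_le[OF assms(3)])
    fix s :: real
    assume "s \<in> {-1..1}"
    then have "\<bar>s / \<delta>\<bar> \<le> 1 / \<delta>"
      using \<open>0 < \<delta>\<close> by (auto simp: divide_right_mono abs_le_iff)
    then have "norm (f (t0 + s / \<delta>) - f t0 - (s / \<delta>) *\<^sub>R D) \<le> \<epsilon> * \<bar>s / \<delta>\<bar>"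
      by (rule approx)
    also have "\<dots> \<le> \<epsilon> * (1 / \<delta>)"
      using \<open>\<bar>s / \<delta>\<bar> \<le> 1 / \<delta>\<close> \<open>0 \<le> \<epsilon>\<close> by (rule mult_left_mono)
    finally show "norm (f (t0 + s / \<delta>) - f t0 - (s / \<delta>) *\<^sub>R D) \<le> \<epsilon> / \<delta>"
      by simp
  qed
qed

lemma norm_linear_windowed_integral_le:
  assumes "1 \<le> \<delta>" "1 \<le> \<mu>"
    and "((\<lambda>s. (C + D / of_real \<delta> * of_real s) * of_real (1 - s^2) * exp (\<i> * of_real (- \<mu> * s)))
          has_integral V) {-1..1}"
  shows "norm V \<le> (8 * norm C + 28 * norm D) / \<mu>^2"
proof -
  have "norm V \<le> (8 * norm C + 28 * norm (D / of_real \<delta>)) / (- \<mu>)^2"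
    using assms(2,3) by (intro norm_linear_bump_integral_le) auto
  moreover have "norm (D / of_real \<delta>) \<le> norm D"
    using \<open>1 \<le> \<delta>\<close> by (simp add: norm_divide divide_le_eq mult_le_cancel_left1)
  ultimately show ?thesis
    by (simp add: divide_right_mono order_trans)
qed

section \<open>The off-diagonal estimate\<close>

text \<open>Scaling the time variable by this width puts the frequency of index J at
  real (J+2) / theta, while distinct frequencies stay at least 1 / theta apart (by freq_gap).\<close>

definition window_width :: "real \<Rightarrow> real \<Rightarrow> nat \<Rightarrow> real" where
  "window_width \<theta> b J = \<theta> * real (J+2) * ln (real (J+2)) powr b"

lemma ln_ge_1: "3 \<le> x \<Longrightarrow> 1 \<le> ln (x::real)"
  using exp_le ln_ge_iff by fastforce

lemma window_width_pos: "0 < \<theta> \<Longrightarrow> 0 < window_width \<theta> b J"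
  unfolding window_width_def by simp

lemma window_width_ge:
  assumes "0 < \<theta>" "0 \<le> b" "1 \<le> J"
  shows "\<theta> * real (J+2) \<le> window_width \<theta> b J"
proof -
  have "1 \<le> ln (real (J+2)) powr b"
    using assms(2,3) ln_ge_1[of "real (J+2)"] by (intro ge_one_powr_ge_zero) auto
  then show ?thesis
    unfolding window_width_def using assms(1) by simp
qed

lemma freq_div_window_width: "0 < \<theta> \<Longrightarrow> freq b J / window_width \<theta> b J = real (J+2) / \<theta>"
  unfolding freq_def window_width_def by (simp add: power2_eq_square)

lemma window_width_div_weight: "window_width \<theta> b J / weight a J = \<theta> * ln (real (J+2)) powr (b - a)"
  unfolding window_width_def weight_def by (simp add: powr_diff)

lemma norm_bump_ft_conj_le:
  assumes "0 < \<delta>" "1 \<le> \<mu>"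
  shows "norm (bump_ft (- freq b n / \<delta> - \<mu>)) \<le> 8 / \<mu>^2"
proof (rule norm_bump_ft_le[OF assms(2)])
  have "0 \<le> freq b n / \<delta>"
    unfolding freq_def using assms(1) by simp
  then show "\<mu> \<le> \<bar>- freq b n / \<delta> - \<mu>\<bar>"
    using assms(2) by linarith
qed

lemma norm_bump_ft_freq_gap_le:
  assumes "0 \<le> b" "0 < \<theta>" "\<theta> \<le> 1" "n \<noteq> J"
  shows "norm (bump_ft (freq b n / window_width \<theta> b J - real (J+2) / \<theta>)) \<le> 8 * \<theta>^2 * inv_sq_dist J n"
proof -
  let ?\<delta> = "window_width \<theta> b J"
  have "0 < ?\<delta>"
    using assms(2) by (rule window_width_pos)
  have "0 < real (J+2) * ln (real (J+2)) powr b"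
    by simp
  then have "\<bar>real n - real J\<bar> / \<theta> = \<bar>real n - real J\<bar> * real (J+2) * ln (real (J+2)) powr b / ?\<delta>"
    unfolding window_width_def mult.assoc by simp
  also have "\<dots> \<le> \<bar>freq b n - freq b J\<bar> / ?\<delta>"
    using freq_gap[OF assms(1), of n J] \<open>0 < ?\<delta>\<close> by (simp add: divide_right_mono)
  also have "\<dots> = \<bar>freq b n / ?\<delta> - freq b J / ?\<delta>\<bar>"
    using \<open>0 < ?\<delta>\<close> by (simp add: diff_divide_distrib[symmetric] abs_div)
  also have "\<dots> = \<bar>freq b n / ?\<delta> - real (J+2) / \<theta>\<bar>"
    by (simp only: freq_div_window_width[OF assms(2)])
  finally have "\<bar>real n - real J\<bar> / \<theta> \<le> \<bar>freq b n / ?\<delta> - real (J+2) / \<theta>\<bar>" .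
  moreover have "1 \<le> \<bar>real n - real J\<bar> / \<theta>"
    using assms(2-4) by (simp add: field_simps)
  ultimately have "norm (bump_ft (freq b n / ?\<delta> - real (J+2) / \<theta>)) \<le> 8 / (\<bar>real n - real J\<bar> / \<theta>)^2"
    by (rule norm_bump_ft_le[rotated])
  also have "\<dots> = 8 * \<theta>^2 * inv_sq_dist J n"
    unfolding inv_sq_dist_def using assms(4) by (simp add: power_divide)
  finally show ?thesis .
qed

lemma norm_windowed_term_sub_peak_le:
  assumes "0 \<le> b" "norm A \<le> 1" "norm B \<le> 1" "2 \<le> J" "0 < \<theta>" "\<theta> \<le> 1"
  shows "norm (windowed_term a b A B t0 (window_width \<theta> b J) (real (J+2) / \<theta>) n
               - (if n = J then A * exp (\<i> * of_real (t0 * freq b J)) / of_real (weight a J) * (4/3) else 0))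
         \<le> 8 * \<theta>^2 * (inv_sq_dist J n / weight a n) + 8 * \<theta>^2 / real (J+2)^2 * (1 / weight a n)"
proof -
  define x where "x = real (J+2)"
  define \<delta> where "\<delta> = window_width \<theta> b J"
  define c1 where "c1 n = A * exp (\<i> * of_real (t0 * freq b n)) / of_real (weight a n)" for n
  define c2 where "c2 = B * exp (\<i> * of_real (- (t0 * freq b n))) / of_real (weight a n)"
  have "0 < \<delta>" "1 \<le> x / \<theta>"
    unfolding \<delta>_def x_def using window_width_pos assms(4-6) by (auto simp: field_simps)
  have norm_c: "norm (c1 n) \<le> 1 / weight a n" "norm c2 \<le> 1 / weight a n"
    unfolding c1_def c2_def using assms(2,3)
    by (simp_all add: norm_mult norm_divide divide_right_mono del: of_real_minus)
  have main: "norm (c1 n) * norm (bump_ft (freq b n / \<delta> - x / \<theta>)) \<le> 1 / weight a n * (8 * \<theta>^2 * inv_sq_dist J n)"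
    if "n \<noteq> J"
    using norm_c(1) norm_bump_ft_freq_gap_le[OF assms(1,5,6) that] unfolding \<delta>_def x_def
    by (intro mult_mono) simp_all
  have "norm c2 * norm (bump_ft (- freq b n / \<delta> - x / \<theta>)) \<le> 1 / weight a n * (8 * \<theta>^2 / x^2)"
    using norm_c(2) norm_bump_ft_conj_le[OF \<open>0 < \<delta>\<close> \<open>1 \<le> x / \<theta>\<close>, of b n]
    by (intro mult_mono) (simp_all add: power_divide)
  then have conj: "norm (c2 * bump_ft (- freq b n / \<delta> - x / \<theta>)) \<le> 8 * \<theta>^2 / x^2 * (1 / weight a n)"
    unfolding norm_mult by (simp only: mult.commute)
  show ?thesis
  proof (cases "n = J")
    case True
    then have "freq b n / \<delta> - x / \<theta> = 0"
      unfolding \<delta>_def x_def using freq_div_window_width[OF \<open>0 < \<theta>\<close>] by simp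
    then have "windowed_term a b A B t0 \<delta> (x / \<theta>) n - c1 J * (4/3) = c2 * bump_ft (- freq b n / \<delta> - x / \<theta>)"
      unfolding windowed_term_def c1_def c2_def True by (simp add: bump_ft_0)
    then show ?thesis
      using conj True unfolding c1_def \<delta>_def x_def by (simp add: inv_sq_dist_def mult.commute)
  next
    case False
    have "norm (c1 n * bump_ft (freq b n / \<delta> - x / \<theta>)) \<le> 8 * \<theta>^2 * (inv_sq_dist J n / weight a n)"
      using main[OF False] unfolding norm_mult by (simp add: field_simps)
    moreover have "norm (windowed_term a b A B t0 \<delta> (x / \<theta>) n)
        \<le> norm (c1 n * bump_ft (freq b n / \<delta> - x / \<theta>)) + norm (c2 * bump_ft (- freq b n / \<delta> - x / \<theta>))"
      unfolding windowed_term_def c1_def c2_def by (rule norm_triangle_ineq)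
    ultimately show ?thesis
      using conj False unfolding \<delta>_def x_def by simp
  qed
qed

lemma norm_windowed_sum_sub_peak_le:
  assumes "1 < a" "0 \<le> b" "norm A \<le> 1" "norm B \<le> 1" "2 \<le> J" "0 < \<theta>" "\<theta> \<le> 1"
    and sums: "windowed_term a b A B t0 (window_width \<theta> b J) (real (J+2) / \<theta>) sums I"
  shows "norm (I - A * exp (\<i> * of_real (t0 * freq b J)) / of_real (weight a J) * (4/3))
         \<le> 64 * 2 powr a * \<theta>^2 / weight a J + 40 * \<theta>^2 / real (J+2)^2 * (\<Sum>n. 1 / weight a n)"
proof -
  define x where "x = real (J+2)"
  define P where "P = A * exp (\<i> * of_real (t0 * freq b J)) / of_real (weight a J) * (4/3)"
  have "(\<lambda>n. windowed_term a b A B t0 (window_width \<theta> b J) (x / \<theta>) n - (if n = J then P else 0))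
        sums (I - P)"
    unfolding x_def by (intro sums_diff sums sums_single)
  moreover have "(\<lambda>n. 8 * \<theta>^2 * (inv_sq_dist J n / weight a n) + 8 * \<theta>^2 / x^2 * (1 / weight a n))
      sums (8 * \<theta>^2 * (\<Sum>n. inv_sq_dist J n / weight a n) + 8 * \<theta>^2 / x^2 * (\<Sum>n. 1 / weight a n))"
    using assms by (intro sums_add sums_mult summable_sums sum_inv_sq_dist_div_weight(1) summable_inverse_weight)
  ultimately have "norm (I - P) \<le> 8 * \<theta>^2 * (\<Sum>n. inv_sq_dist J n / weight a n)
                                   + 8 * \<theta>^2 / x^2 * (\<Sum>n. 1 / weight a n)"
    using norm_windowed_term_sub_peak_le[OF assms(2-7)] unfolding P_def x_def by (rule norm_sums_le)
  also have "\<dots> \<le> 8 * \<theta>^2 * (8 * 2 powr a / weight a J + 4 / x^2 * (\<Sum>n. 1 / weight a n))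
                  + 8 * \<theta>^2 / x^2 * (\<Sum>n. 1 / weight a n)"
    using sum_inv_sq_dist_div_weight(2)[OF assms(1,5)] unfolding x_def
    by (intro add_right_mono mult_left_mono) auto
  finally show ?thesis
    unfolding P_def x_def by (simp add: field_simps)
qed

section \<open>The peak estimate\<close>

lemma le_inverse_weight_of_large:
  assumes "6 * c * ln (real (J+2)) powr a \<le> real (J+2)"
  shows "c / real (J+2)^2 \<le> 1 / (6 * weight a J)"
proof -
  have "c * (6 * weight a J) \<le> real (J+2)^2"
    using mult_right_mono[OF assms, of "real (J+2)"] unfolding weight_def
    by (simp add: power2_eq_square algebra_simps)
  then show ?thesis
    by (simp add: field_simps)
qed

lemma peak_estimate:
  fixes A B D :: complex
  assumes "1 < a" "a \<le> b" "1/2 \<le> norm A" "norm A \<le> 1" "norm B \<le> 1"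
    and \<theta>: "0 < \<theta>" "\<theta> \<le> 1" "64 * 2 powr a * \<theta>^2 = 1/6"
    and J: "2 \<le> J" "1 \<le> \<theta> * real (J+2)"
    and large: "6 * \<theta>^2 * (40 * (\<Sum>n. 1 / weight a n) + 8 * norm (mixed_series a b A B t0) + 28 * norm D)
                 * ln (real (J+2)) powr a \<le> real (J+2)"
    and approx: "\<And>u. \<bar>u\<bar> \<le> 1 / window_width \<theta> b J \<Longrightarrow>
        norm (mixed_series a b A B (t0 + u) - mixed_series a b A B t0 - u *\<^sub>R D) \<le> \<epsilon> * \<bar>u\<bar>"
  shows "\<theta> * ln (real (J+2)) powr (b - a) \<le> 6 * \<epsilon>"
proof -
  define H where "H = mixed_series a b A B"
  define x where "x = real (J+2)"
  define \<delta> where "\<delta> = window_width \<theta> b J"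
  define S where "S = (\<Sum>n. 1 / weight a n)"
  define P where "P = A * exp (\<i> * of_real (t0 * freq b J)) / of_real (weight a J) * (4/3)"
  have "4 \<le> x" "1 \<le> x / \<theta>"
    unfolding x_def using J(1) \<theta>(1,2) by (auto simp: field_simps)
  have "1 \<le> \<delta>"
    using window_width_ge[of \<theta> b J] J assms(1,2) \<theta>(1) unfolding \<delta>_def by simp
  then have "\<delta> \<noteq> 0"
    by simp
  then obtain I where I_sums: "windowed_term a b A B t0 \<delta> (x / \<theta>) sums I"
    and I: "((\<lambda>s. of_real (1 - s^2) * exp (\<i> * of_real (- (x / \<theta>) * s)) * H (t0 + s / \<delta>)) has_integral I) {-1..1}"
    unfolding H_def by (rule has_integral_windowed_mixed_series[OF assms(1,4,5)])
  define V where "V = integral {-1..1}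
    (\<lambda>s. (H t0 + D / of_real \<delta> * of_real s) * of_real (1 - s^2) * exp (\<i> * of_real (- (x / \<theta>) * s)))"
  have V: "((\<lambda>s. (H t0 + D / of_real \<delta> * of_real s) * of_real (1 - s^2) * exp (\<i> * of_real (- (x / \<theta>) * s)))
           has_integral V) {-1..1}"
    unfolding V_def by (intro integrable_integral integrable_continuous_interval continuous_intros)
  have "norm V \<le> (8 * norm (H t0) + 28 * norm D) * \<theta>^2 / x^2"
    using norm_linear_windowed_integral_le[OF \<open>1 \<le> \<delta>\<close> \<open>1 \<le> x / \<theta>\<close> V] by (simp add: power_divide)
  moreover have "((\<lambda>s. of_real (1 - s^2) * exp (\<i> * of_real (- (x / \<theta>) * s))
                       * (H (t0 + s / \<delta>) - H t0 - (s / \<delta>) *\<^sub>R D)) has_integral I - V) {-1..1}"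
    using has_integral_diff[OF I V] \<open>1 \<le> \<delta>\<close> by (simp add: algebra_simps scaleR_conv_of_real)
  with approx have "norm (I - V) \<le> 2 * (\<epsilon> / \<delta>)"
    using \<open>1 \<le> \<delta>\<close> unfolding H_def \<delta>_def by (intro norm_increment_integral_le[where \<nu> = "- (x / \<theta>)"]) auto
  moreover have "2 / (3 * weight a J) \<le> norm P"
    unfolding P_def using assms(3) by (simp add: norm_mult norm_divide field_simps)
  moreover have "norm (I - P) \<le> 1 / (6 * weight a J) + 40 * \<theta>^2 / x^2 * S"
    using norm_windowed_sum_sub_peak_le[OF assms(1) _ assms(4,5) J(1) \<theta>(1,2)] I_sums
          assms(1,2) \<theta>(3) unfolding P_def S_def \<delta>_def x_def by simp
  moreover have "\<theta>^2 * (40 * S + 8 * norm (H t0) + 28 * norm D) / x^2 \<le> 1 / (6 * weight a J)"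
    using large unfolding H_def S_def x_def by (intro le_inverse_weight_of_large) (simp add: mult_ac)
  moreover have "norm P \<le> norm (I - V) + norm (I - P) + norm V"
    using norm_triangle_ineq4[of "I - V" "I - P"] norm_triangle_ineq[of "(I - V) - (I - P)" V] by simp
  moreover have "40 * \<theta>^2 / x^2 * S + (8 * norm (H t0) + 28 * norm D) * \<theta>^2 / x^2
               = \<theta>^2 * (40 * S + 8 * norm (H t0) + 28 * norm D) / x^2"
    using \<open>4 \<le> x\<close> by (simp add: field_simps)
  moreover have "2 / (3 * weight a J) = 1 / (3 * weight a J) + 1 / (6 * weight a J) + 1 / (6 * weight a J)"
    by (simp add: field_simps)
  ultimately have "1 / (3 * weight a J) \<le> 2 * (\<epsilon> / \<delta>)"
    by linarith
  then have "\<delta> / weight a J \<le> 6 * \<epsilon>"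
    using \<open>1 \<le> \<delta>\<close> by (simp add: field_simps)
  then show ?thesis
    unfolding \<delta>_def window_width_div_weight .
qed

definition linear_approx_at :: "(real \<Rightarrow> 'a::real_normed_vector) \<Rightarrow> real \<Rightarrow> 'a \<Rightarrow> real \<Rightarrow> bool" where
  "linear_approx_at f t0 D \<epsilon> \<longleftrightarrow>
     (\<exists>\<eta>>0. \<forall>u. \<bar>u\<bar> < \<eta> \<longrightarrow> norm (f (t0 + u) - f t0 - u *\<^sub>R D) \<le> \<epsilon> * \<bar>u\<bar>)"

lemma differentiable_imp_linear_approx_at:
  fixes f :: "real \<Rightarrow> 'a::real_normed_vector"
  assumes "f differentiable (at t0)"
  shows "\<exists>D. \<forall>\<epsilon>>0. linear_approx_at f t0 D \<epsilon>"
proof -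
  let ?D = "vector_derivative f (at t0)"
  have "(f has_derivative (\<lambda>h. h *\<^sub>R ?D)) (at t0)"
    using vector_derivative_works assms unfolding has_vector_derivative_def by blast
  then have "\<forall>\<epsilon>>0. \<exists>\<eta>>0. \<forall>t. norm (t - t0) < \<eta> \<longrightarrow> norm (f t - f t0 - (t - t0) *\<^sub>R ?D) \<le> \<epsilon> * norm (t - t0)"
    unfolding has_derivative_within_alt by auto
  then have "linear_approx_at f t0 ?D \<epsilon>" if "\<epsilon> > 0" for \<epsilon>
    unfolding linear_approx_at_def using that by (metis add_diff_cancel_left' real_norm_def)
  then show ?thesis
    by blast
qed

lemma lipschitz_at_imp_linear_approx_at: "lipschitz_at f t0 \<Longrightarrow> \<exists>L. linear_approx_at f t0 0 L"
  unfolding lipschitz_at_def linear_approx_at_def by (metis add_diff_cancel_left' diff_zero scaleR_zero_right)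

text \<open>With this constant the off-diagonal terms contribute at most 1 / (6 w_J), a quarter of the
  lower bound 2 / (3 w_J) for the peak term.\<close>

definition theta :: "real \<Rightarrow> real" where
  "theta a = 1 / sqrt (384 * 2 powr a)"

lemma theta_pos: "0 < theta a"
  unfolding theta_def by simp

lemma theta_le_1: "0 \<le> a \<Longrightarrow> theta a \<le> 1"
  unfolding theta_def using ge_one_powr_ge_zero[of 2 a] by simp

lemma theta_square: "64 * 2 powr a * (theta a)^2 = 1/6"
  unfolding theta_def by (simp add: power_divide)

lemma linear_approx_at_mixed_series_imp:
  assumes "1 < a" "a \<le> b" "1/2 \<le> norm A" "norm A \<le> 1" "norm B \<le> 1"
    and "linear_approx_at (mixed_series a b A B) t0 D \<epsilon>"
  shows "\<forall>\<^sub>F J in sequentially. theta a * ln (real (J+2)) powr (b - a) \<le> 6 * \<epsilon>"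
proof -
  define \<theta> where "\<theta> = theta a"
  have \<theta>: "0 < \<theta>" "\<theta> \<le> 1" "64 * 2 powr a * \<theta>^2 = 1/6"
    unfolding \<theta>_def using assms(1) by (simp_all add: theta_pos theta_le_1 theta_square)
  obtain \<eta> where "0 < \<eta>"
    and \<eta>: "\<And>u. \<bar>u\<bar> < \<eta> \<Longrightarrow> norm (mixed_series a b A B (t0 + u) - mixed_series a b A B t0 - u *\<^sub>R D) \<le> \<epsilon> * \<bar>u\<bar>"
    using assms(6) unfolding linear_approx_at_def by blast
  define K where "K = 40 * (\<Sum>n. 1 / weight a n) + 8 * norm (mixed_series a b A B t0) + 28 * norm D"
  have "\<forall>\<^sub>F J in sequentially. 2 \<le> J"
    by (rule eventually_ge_at_top)
  moreover have "\<forall>\<^sub>F J in sequentially. c \<le> real (J+2)" for c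
    by real_asymp
  moreover have "\<forall>\<^sub>F J in sequentially. 6 * \<theta>^2 * K * ln (real (J+2)) powr a \<le> real (J+2)"
    by real_asymp
  ultimately have "\<forall>\<^sub>F J in sequentially. 2 \<le> J \<and> 1 / \<theta> \<le> real (J+2) \<and> 2 / (\<theta> * \<eta>) \<le> real (J+2)
                    \<and> 6 * \<theta>^2 * K * ln (real (J+2)) powr a \<le> real (J+2)"
    by (intro eventually_conj)
  then show ?thesis
  proof (rule eventually_mono, elim conjE)
    fix J :: nat
    assume J: "2 \<le> J" "1 / \<theta> \<le> real (J+2)" "2 / (\<theta> * \<eta>) \<le> real (J+2)"
      and large: "6 * \<theta>^2 * K * ln (real (J+2)) powr a \<le> real (J+2)"
    have "2 / \<eta> \<le> \<theta> * real (J+2)"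
      using J(3) \<theta>(1) \<open>0 < \<eta>\<close> by (simp add: field_simps)
    also have "\<dots> \<le> window_width \<theta> b J"
      using \<theta>(1) J(1) assms(1,2) by (intro window_width_ge) auto
    finally have small: "1 / window_width \<theta> b J < \<eta>"
      using \<open>0 < \<eta>\<close> window_width_pos[OF \<theta>(1), of b J] by (simp add: field_simps)
    have "\<theta> * ln (real (J+2)) powr (b - a) \<le> 6 * \<epsilon>"
    proof (rule peak_estimate[OF assms(1-5) \<theta> J(1)])
      show "1 \<le> \<theta> * real (J+2)"
        using J(2) \<theta>(1) by (simp add: field_simps)
      show "6 * \<theta>^2 * (40 * (\<Sum>n. 1 / weight a n) + 8 * norm (mixed_series a b A B t0) + 28 * norm D)
            * ln (real (J+2)) powr a \<le> real (J+2)"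
        using large unfolding K_def .
      fix u :: real
      assume "\<bar>u\<bar> \<le> 1 / window_width \<theta> b J"
      then show "norm (mixed_series a b A B (t0 + u) - mixed_series a b A B t0 - u *\<^sub>R D) \<le> \<epsilon> * \<bar>u\<bar>"
        using \<eta> small by simp
    qed
    then show "theta a * ln (real (J+2)) powr (b - a) \<le> 6 * \<epsilon>"
      unfolding \<theta>_def .
  qed
qed

theorem mixed_series_not_differentiable:
  assumes "1 < a" "a \<le> b" "1/2 \<le> norm A" "norm A \<le> 1" "norm B \<le> 1"
  shows "\<not> mixed_series a b A B differentiable (at t)"
proof
  assume "mixed_series a b A B differentiable (at t)"
  then obtain D where "\<forall>\<epsilon>>0. linear_approx_at (mixed_series a b A B) t D \<epsilon>"
    using differentiable_imp_linear_approx_at by blast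
  then have "linear_approx_at (mixed_series a b A B) t D (theta a / 12)"
    using theta_pos[of a] by simp
  then have "\<forall>\<^sub>F J in sequentially. theta a * ln (real (J+2)) powr (b - a) \<le> 6 * (theta a / 12)"
    by (rule linear_approx_at_mixed_series_imp[OF assms])
  moreover have "\<forall>\<^sub>F J in sequentially. 1 \<le> ln (real (J+2)) powr (b - a)"
    using assms(2) by (intro eventually_sequentiallyI[of 1] ge_one_powr_ge_zero ln_ge_1) auto
  ultimately have "\<forall>\<^sub>F J in sequentially. False"
  proof eventually_elim
    case (elim J)
    then have "theta a * 1 \<le> theta a * ln (real (J+2)) powr (b - a)"
      using theta_pos[of a] by (intro mult_left_mono) auto
    with elim(1) theta_pos[of a] show False
      by simp
  qed
  then show False
    by simp
qed

theorem mixed_series_not_lipschitz_at: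
  assumes "1 < a" "a < b" "1/2 \<le> norm A" "norm A \<le> 1" "norm B \<le> 1"
  shows "\<not> lipschitz_at (mixed_series a b A B) t"
proof
  assume "lipschitz_at (mixed_series a b A B) t"
  then obtain L where "linear_approx_at (mixed_series a b A B) t 0 L"
    using lipschitz_at_imp_linear_approx_at by blast
  then have "\<forall>\<^sub>F J in sequentially. theta a * ln (real (J+2)) powr (b - a) \<le> 6 * L"
    using assms(2) by (intro linear_approx_at_mixed_series_imp[OF assms(1) _ assms(3-5)]) auto
  moreover have "\<forall>\<^sub>F J in sequentially. 6 * L / theta a + 1 \<le> ln (real (J+2)) powr (b - a)"
    using assms(2) by real_asymp
  ultimately have "\<forall>\<^sub>F J in sequentially. False"
  proof eventually_elim
    case (elim J)
    then have "theta a * (6 * L / theta a + 1) \<le> 6 * L"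
      using theta_pos[of a] by (meson mult_left_mono order.trans less_imp_le)
    moreover have "theta a * (6 * L / theta a + 1) = 6 * L + theta a"
      using theta_pos[of a] by (simp add: field_simps)
    ultimately show False
      using theta_pos[of a] by simp
  qed
  then show False
    by simp
qed

lemma differentiable_of_real_comp:
  "g differentiable (at t) \<Longrightarrow> (\<lambda>s. complex_of_real (g s)) differentiable (at t)"
  by (rule differentiable_compose[OF bounded_linear_imp_differentiable[OF bounded_linear_of_real]])

lemma lipschitz_at_of_real_iff: "lipschitz_at (\<lambda>s. complex_of_real (g s)) t \<longleftrightarrow> lipschitz_at g t"
  unfolding lipschitz_at_def by (simp flip: of_real_diff)

theorem mainTheorem11:
  fixes a b :: real
  assumes "1 < a" and "a \<le> b"
  shows "continuous_on UNIV (F1 a b) \<and> bounded (range (F1 a b))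
       \<and> continuous_on UNIV (\<lambda>t. Re (F1 a b t)) \<and> bounded (range (\<lambda>t. Re (F1 a b t)))
       \<and> continuous_on UNIV (\<lambda>t. Im (F1 a b t)) \<and> bounded (range (\<lambda>t. Im (F1 a b t)))
       \<and> (\<forall>t. \<not> (F1 a b) differentiable (at t))
       \<and> (\<forall>t. \<not> (\<lambda>s. Re (F1 a b s)) differentiable (at t))
       \<and> (\<forall>t. \<not> (\<lambda>s. Im (F1 a b s)) differentiable (at t))
       \<and> (a < b \<longrightarrow> (\<forall>t. \<not> lipschitz_at (F1 a b) t
                         \<and> \<not> lipschitz_at (\<lambda>s. Re (F1 a b s)) t
                         \<and> \<not> lipschitz_at (\<lambda>s. Im (F1 a b s)) t))"
proof -
  note F = F1_eq_mixed_series[of a b]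
    and Re = of_real_Re_F1[OF assms(1), of b] and Im = of_real_Im_F1[OF assms(1), of b]
  have "continuous_on UNIV (F1 a b)"
    unfolding F using assms(1) by (intro continuous_on_mixed_series) auto
  moreover have "norm (F1 a b t) \<le> (\<Sum>n. 2 / weight a n)" for t
    unfolding F using assms(1) by (intro norm_mixed_series_le) auto
  then have "bounded (range (F1 a b))" "bounded (range (\<lambda>t. Re (F1 a b t)))"
            "bounded (range (\<lambda>t. Im (F1 a b t)))"
    unfolding bounded_iff by (auto intro: order_trans[OF abs_Re_le_cmod] order_trans[OF abs_Im_le_cmod])
  moreover have "\<not> F1 a b differentiable (at t)"
    and "\<not> (\<lambda>s. complex_of_real (Re (F1 a b s))) differentiable (at t)"
    and "\<not> (\<lambda>s. complex_of_real (Im (F1 a b s))) differentiable (at t)" for t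
    unfolding Re Im unfolding F using assms by (simp_all add: mixed_series_not_differentiable norm_divide)
  moreover have "\<not> lipschitz_at (F1 a b) t"
    and "\<not> lipschitz_at (\<lambda>s. complex_of_real (Re (F1 a b s))) t"
    and "\<not> lipschitz_at (\<lambda>s. complex_of_real (Im (F1 a b s))) t" if "a < b" for t
    unfolding Re Im unfolding F using assms(1) that by (simp_all add: mixed_series_not_lipschitz_at norm_divide)
  ultimately show ?thesis
    by (auto intro: continuous_intros dest: differentiable_of_real_comp simp: lipschitz_at_of_real_iff)
qed

end
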